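(* Let $\ell\ge1$, $m\ge0$, positive integers $n_0,\dots,n_m$ with $n:=\sum_{j=0}^m n_j-1\ge1$, and distinct points $z_0=0,z_1,\dots,z_m$ in the open unit disc be given, and let $Z$, $e$ be as below. Let $t_1,\dots,t_\ell$ be positive integers with $t_1+\dots+t_\ell=n\ell$, let $t=\max_i t_i$, and let $V$, $N$ be as below. Then the first $\ell$ rows of the $\ell(n+1)\times\ell n$ matrix $VN$ are zero, so $VN=\begin{bmatrix}0_{\ell\times\ell n}\\ L\end{bmatrix}$ with $L\in\mathbb{C}^{\ell n\times\ell n}$, and $L$ is nonsingular if and only if $t_1=t_2=\dots=t_\ell=n$.
   Context: $Z_j$ is the $n_j\times n_j$ lower bidiagonal matrix with $z_j$ on the diagonal and $1$ on the first subdiagonal, and $Z=\operatorname{diag}(Z_0,\dots,Z_m)\in\mathbb{C}^{(n+1)\times(n+1)}$. $e\in\mathbb{R}^{n+1}$ is the column vector obtained by stacking the vectors $(1,0,\dots,0)'\in\mathbb{R}^{n_j}$, $j=0,\dots,m$. $V=\begin{bmatrix}(Ze)\otimes I_\ell & (Z^2e)\otimes I_\ell&\cdots&(Z^te)\otimes I_\ell\end{bmatrix}\in\mathbb{C}^{\ell(n+1)\times\ell t}$. For $k=1,\dots,t$, $N_k=\operatorname{diag}(e^k_{t_1},\dots,e^k_{t_\ell})\in\mathbb{R}^{\ell\times\ell n}$, where $e^k_{j}\in\mathbb{R}^{1\times j}$ is the row vector whose $k$-th entry is $1$ and other entries $0$ if $k\le j$, and the zero row vector of length $j$ if $k>j$;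 equivalently $\operatorname{diag}(z^{t_1},\dots,z^{t_\ell})\,\operatorname{diag}(\pi_{t_1}(z^{-1}),\dots,\pi_{t_\ell}(z^{-1}))=\sum_{k=1}^t N_k z^k$ with $\pi_\nu(z)=(z^{\nu-1},\dots,z,1)$. $N=\begin{bmatrix}N_1\\ \vdots\\ N_t\end{bmatrix}\in\mathbb{R}^{\ell t\times\ell n}$. $\otimes$ is the Kronecker product. *)

theory Defs
  imports Complex_Main "Jordan_Normal_Form.Matrix"
begin

definition kron :: "'a::times mat \<Rightarrow> 'a mat \<Rightarrow> 'a mat" where
  "kron A B = mat (dim_row A * dim_row B) (dim_col A * dim_col B)
     (\<lambda>(i,j). A $$ (i div dim_row B, j div dim_col B) * B $$ (i mod dim_row B, j mod dim_col B))"

definition Zblock :: "nat \<Rightarrow> complex \<Rightarrow> complex mat" where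
  "Zblock k z = mat k k (\<lambda>(r,c). if r = c then z else if r = c + 1 then 1 else 0)"

definition Zmat :: "nat \<Rightarrow> (nat \<Rightarrow> nat) \<Rightarrow> (nat \<Rightarrow> complex) \<Rightarrow> complex mat" where
  "Zmat m ns zs = diag_block_mat (map (\<lambda>j. Zblock (ns j) (zs j)) [0..<Suc m])"

text \<open>e: stacking of the first unit vectors (1,0,...,0) of length ns j, j = 0..m.\<close>
definition evec :: "nat \<Rightarrow> (nat \<Rightarrow> nat) \<Rightarrow> complex vec" where
  "evec m ns = vec (\<Sum>j\<le>m. ns j)
     (\<lambda>i. if \<exists>j\<le>m. i = (\<Sum>k<j. ns k) then 1 else 0)"

text \<open>V = [ (Ze) \<otimes> I_l, (Z^2 e) \<otimes> I_l, ..., (Z^t e) \<otimes> I_l ]; column c lies in block c div l.\<close>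
definition Vmat :: "nat \<Rightarrow> nat \<Rightarrow> (nat \<Rightarrow> nat) \<Rightarrow> (nat \<Rightarrow> complex) \<Rightarrow> nat \<Rightarrow> complex mat" where
  "Vmat l m ns zs t =
     (let Z = Zmat m ns zs; e = evec m ns; d = dim_vec e in
      mat (l * d) (l * t)
       (\<lambda>(r,c). (kron (mat_of_cols d [(Z ^\<^sub>m (c div l + 1)) *\<^sub>v e]) (1\<^sub>m l)) $$ (r, c mod l)))"

text \<open>N_k = diag(e^k_{t_1},...,e^k_{t_l}) (l x (sum of t_i)); here ts i, i < l, stands for t_(i+1).\<close>
definition Nk :: "nat \<Rightarrow> (nat \<Rightarrow> nat) \<Rightarrow> nat \<Rightarrow> complex mat" where
  "Nk l ts k = mat l (\<Sum>i<l. ts i)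
     (\<lambda>(i,c). if 1 \<le> k \<and> k \<le> ts i \<and> c = (\<Sum>i'<i. ts i') + (k - 1) then 1 else 0)"

definition Nmat :: "nat \<Rightarrow> (nat \<Rightarrow> nat) \<Rightarrow> nat \<Rightarrow> complex mat" where
  "Nmat l ts t = mat (l * t) (\<Sum>i<l. ts i) (\<lambda>(r,c). Nk l ts (r div l + 1) $$ (r mod l, c))"

end

theory Submission
  imports Defs "Jordan_Normal_Form.Determinant" "HOL-Computational_Algebra.Polynomial_Factorial"
    "HOL-Computational_Algebra.Field_as_Ring"
begin

(* Block j of Z acts on C^(n_j) as multiplication by x acts on C[x]/(x - z_j)^(n_j) in the basis
   of powers of (x - z_j), and e picks the constant 1 in every block. Hence the coordinates of
   p(Z) e in block j are the first n_j Taylor coefficients of p at z_j, and p(Z) e = 0 iff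
   Q = prod_j (x - z_j)^(n_j) divides p. As z_0 = 0, the first coordinate of Z^k e vanishes for
   k >= 1: these are the zero rows of VN. The matrix N only selects columns of V; grouping the
   rows of L by their residue a modulo l and its columns by the blocks of N, one finds that L v = 0
   iff Q divides x (v_(a,1) + v_(a,2) x + ... + v_(a,t_a) x^(t_a - 1)) for every a. Since
   deg Q = n + 1 and Q(0) = 0, there is a nonzero solution iff some t_a exceeds n, which (the t_a
   summing to n l) happens iff they are not all equal to n. *)

lemma invertible_mat_iff_trivial_kernel:
  fixes A :: "'a::field mat"
  assumes A: "A \<in> carrier_mat n n"
  shows "invertible_mat A \<longleftrightarrow> (\<forall>v\<in>carrier_vec n. A *\<^sub>v v = 0\<^sub>v n \<longrightarrow> v = 0\<^sub>v n)"
proof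
  assume "invertible_mat A"
  then obtain B where B: "B * A = 1\<^sub>m (dim_row B)" "A * B = 1\<^sub>m (dim_row A)"
    unfolding invertible_mat_def inverts_mat_def by auto
  have Bc: "B \<in> carrier_mat n n" using B A
    by (metis carrier_matD carrier_matI index_mult_mat(2,3) index_one_mat(2,3))
  show "\<forall>v\<in>carrier_vec n. A *\<^sub>v v = 0\<^sub>v n \<longrightarrow> v = 0\<^sub>v n"
  proof (intro ballI impI)
    fix v assume v: "v \<in> carrier_vec n" and Av: "A *\<^sub>v v = 0\<^sub>v n"
    have "v = (B * A) *\<^sub>v v" using B Bc v by auto
    also have "\<dots> = B *\<^sub>v (A *\<^sub>v v)" using Bc A v by (simp add: assoc_mult_mat_vec)
    also have "\<dots> = 0\<^sub>v n" using Av Bc by auto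
    finally show "v = 0\<^sub>v n" .
  qed
next
  assume "\<forall>v\<in>carrier_vec n. A *\<^sub>v v = 0\<^sub>v n \<longrightarrow> v = 0\<^sub>v n"
  then have "det A \<noteq> 0" using det_0_iff_vec_prod_zero_field[OF A] by auto
  from det_non_zero_imp_unit[OF A this, of "()"]
  obtain B where "B * A = 1\<^sub>m n" "A * B = 1\<^sub>m n" "B \<in> carrier_mat n n"
    unfolding Units_def ring_mat_def by auto
  then show "invertible_mat A"
    using A unfolding invertible_mat_def inverts_mat_def square_mat.simps by auto
qed

abbreviation block_start :: "(nat \<Rightarrow> nat) \<Rightarrow> nat \<Rightarrow> nat" where
  "block_start f j \<equiv> \<Sum>q<j. f q"

lemma block_start_add_less:
  assumes "j < M" "i < f j"
  shows "block_start f j + i < block_start f M"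
proof -
  have "block_start f j + i < block_start f (Suc j)" using assms by simp
  also have "\<dots> \<le> block_start f M" using assms by (intro sum_mono2) auto
  finally show ?thesis .
qed

lemma block_start_add_inject:
  assumes "block_start f j + i = block_start f j' + i'" "i < f j" "i' < f j'"
  shows "j = j' \<and> i = i'"
proof -
  have "\<not> j < j'" using block_start_add_less[of j j' i f] assms by linarith
  moreover have "\<not> j' < j" using block_start_add_less[of j' j i' f] assms by linarith
  ultimately show ?thesis using assms(1) by simp
qed

lemma ex_block_start_add:
  "r < block_start f M \<Longrightarrow> \<exists>j<M. \<exists>i<f j. r = block_start f j + i"
proof (induction M)
  case 0 then show ?case by simp
next
  case (Suc M)
  show ?case
  proof (cases "r < block_start f M")
    case True then show ?thesis using Suc.IH less_Suc_eq by blast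
  next
    case False
    then show ?thesis using Suc.prems
      by (intro exI[of _ M]) (auto intro: exI[of _ "r - block_start f M"])
  qed
qed

lemma sum_lessThan_block_start:
  "(\<Sum>c<block_start f M. g c) = (\<Sum>b<M. \<Sum>k<f b. g (block_start f b + k))"
proof (induction M)
  case 0 then show ?case by simp
next
  case (Suc M)
  let ?S = "block_start f M"
  have "(\<Sum>c<?S + f M. g c) = (\<Sum>c<?S. g c) + (\<Sum>c\<in>{?S..<?S + f M}. g c)"
    using sum.atLeastLessThan_concat[of 0 ?S "?S + f M" g] by (simp add: atLeast0LessThan)
  also have "(\<Sum>c\<in>{?S..<?S + f M}. g c) = (\<Sum>k<f M. g (?S + k))"
    by (simp add: sum.atLeastLessThan_shift_0 atLeast0LessThan)
  finally show ?case using Suc.IH by simp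
qed

lemma sum_eq_mult_imp_ex_greater:
  fixes f :: "nat \<Rightarrow> nat"
  assumes "(\<Sum>i<l. f i) = l * n" "i0 < l" "f i0 \<noteq> n"
  shows "\<exists>i<l. n < f i"
proof (rule ccontr)
  assume "\<not> (\<exists>i<l. n < f i)"
  then have "\<forall>i\<in>{..<l}. f i \<le> n" and "\<exists>i\<in>{..<l}. f i < n"
    using assms(2,3) by force+
  then have "(\<Sum>i<l. f i) < (\<Sum>i<l. n)" by (intro sum_strict_mono_ex1) auto
  then show False using assms(1) by simp
qed

lemma mult_add_less_mult:
  fixes p a l n :: nat
  assumes "p < n" "a < l"
  shows "p * l + a < l * n"
proof -
  have "p * l + a < (p + 1) * l" using assms(2) by simp
  also have "\<dots> \<le> n * l" using assms(1) by (intro mult_le_mono1) simp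
  finally show ?thesis by (simp add: mult.commute)
qed

lemma vec_eq_0_iff_index_mult_add:
  fixes w :: "'a::zero vec"
  assumes "w \<in> carrier_vec (l * n)"
  shows "w = 0\<^sub>v (l * n) \<longleftrightarrow> (\<forall>a<l. \<forall>p<n. w $ (p * l + a) = 0)"
proof
  assume "w = 0\<^sub>v (l * n)"
  then show "\<forall>a<l. \<forall>p<n. w $ (p * l + a) = 0" using mult_add_less_mult by simp
next
  assume zero: "\<forall>a<l. \<forall>p<n. w $ (p * l + a) = 0"
  show "w = 0\<^sub>v (l * n)"
  proof (rule eq_vecI)
    fix i assume "i < dim_vec (0\<^sub>v (l * n) :: 'a vec)"
    then have i: "i < l * n" by simp
    then have "l > 0" by (cases l) auto
    then have "i div l < n" "i mod l < l"
      using i by (auto simp: less_mult_imp_div_less mult.commute)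
    then have "w $ (i div l * l + i mod l) = 0" using zero by blast
    then show "w $ i = 0\<^sub>v (l * n) $ i" using i by simp
  qed (use assms in simp)
qed

lemma index_diag_block_mat:
  assumes "\<forall>B\<in>set Bs. dim_col B = dim_row B"
    and "j < length Bs" "i < dim_row (Bs!j)" "c < sum_list (map dim_col Bs)"
  shows "diag_block_mat Bs $$ (block_start (\<lambda>k. dim_row (Bs!k)) j + i, c) =
    (let s = block_start (\<lambda>k. dim_row (Bs!k)) j in
     if s \<le> c \<and> c < s + dim_row (Bs!j) then Bs!j $$ (i, c - s) else 0)"
  using assms
proof (induction Bs arbitrary: j c)
  case Nil then show ?case by simp
next
  case (Cons B Bs)
  show ?case
  proof (cases j)
    case 0
    then show ?thesis using Cons.prems by (auto simp: Let_def dim_diag_block_mat)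
  next
    case (Suc j')
    let ?s = "block_start (\<lambda>k. dim_row (Bs!k)) j'"
    have s: "block_start (\<lambda>k. dim_row ((B#Bs)!k)) (Suc j') = dim_row B + ?s"
      unfolding sum.lessThan_Suc_shift by simp
    have "?s + i < block_start (\<lambda>k. dim_row (Bs!k)) (length Bs)"
      using Cons.prems Suc by (intro block_start_add_less) auto
    then have r: "?s + i < sum_list (map dim_row Bs)"
      by (simp add: sum_list_sum_nth atLeast0LessThan)
    show ?thesis
    proof (cases "c < dim_col B")
      case True
      then show ?thesis using Cons.prems r unfolding Suc s
        by (auto simp: Let_def dim_diag_block_mat)
    next
      case False
      have "diag_block_mat Bs $$ (?s + i, c - dim_col B) =
        (if ?s \<le> c - dim_col B \<and> c - dim_col B < ?s + dim_row (Bs!j')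
         then Bs!j' $$ (i, c - dim_col B - ?s) else 0)"
        using Cons.prems False Suc by (subst Cons.IH) (auto simp: Let_def)
      then show ?thesis using Cons.prems False r unfolding Suc s
        by (auto simp: Let_def dim_diag_block_mat)
    qed
  qed
qed

lemma pcompose_power_left: "pcompose (p ^ k) q = pcompose p q ^ k"
  by (induct k) (simp_all add: pcompose_mult, metis one_pCons pcompose_const)

lemma linear_power_dvd_iff_taylor_coeffs:
  fixes z :: "'a::comm_ring_1"
  shows "[:-z, 1:] ^ N dvd p \<longleftrightarrow> (\<forall>i<N. coeff (pcompose p [:z, 1:]) i = 0)"
proof -
  have pcompose_dvd: "a dvd b \<Longrightarrow> pcompose a q dvd pcompose b q" for a b q :: "'a poly"
    by (auto elim!: dvdE simp: pcompose_mult)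
  have "[:-z, 1:] ^ N dvd p \<longleftrightarrow> monom 1 N dvd pcompose p [:z, 1:]"
  proof
    assume "[:-z, 1:] ^ N dvd p"
    from pcompose_dvd[OF this, of "[:z, 1:]"] show "monom 1 N dvd pcompose p [:z, 1:]"
      by (simp add: pcompose_power_left pcompose_pCons monom_altdef)
  next
    assume "monom 1 N dvd pcompose p [:z, 1:]"
    from pcompose_dvd[OF this, of "[:-z, 1:]"] show "[:-z, 1:] ^ N dvd p"
      by (simp add: pcompose_power_left pcompose_pCons monom_altdef pcompose_assoc[symmetric])
  qed
  then show ?thesis by (simp add: monom_1_dvd_iff')
qed

lemma coprime_linear_polys:
  fixes a b :: complex
  assumes "a \<noteq> b"
  shows "coprime [:-a, 1:] [:-b, 1:]"
proof (rule coprimeI)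
  fix c assume "c dvd [:-a, 1:]" "c dvd [:-b, 1:]"
  then have "c dvd [:-a, 1:] - [:-b, 1:]" by (rule dvd_diff)
  moreover have "is_unit ([:-a, 1:] - [:-b, 1:])"
    using assms by (simp add: is_unit_const_poly_iff dvd_field_iff)
  ultimately show "is_unit c" using dvd_unit_imp_unit by blast
qed

lemma prod_linear_powers_dvd_iff:
  fixes zs :: "nat \<Rightarrow> complex"
  assumes "inj_on zs {0..m}"
  shows "(\<Prod>j\<le>m. [:-zs j, 1:] ^ ns j) dvd p \<longleftrightarrow> (\<forall>j\<le>m. [:-zs j, 1:] ^ ns j dvd p)"
proof
  show "(\<Prod>j\<le>m. [:-zs j, 1:] ^ ns j) dvd p \<Longrightarrow> \<forall>j\<le>m. [:-zs j, 1:] ^ ns j dvd p"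
    by (meson atMost_iff dvd_prodI dvd_trans finite_atMost)
  show "\<forall>j\<le>m. [:-zs j, 1:] ^ ns j dvd p \<Longrightarrow> (\<Prod>j\<le>m. [:-zs j, 1:] ^ ns j) dvd p"
    using assms
  proof (induction m)
    case 0 then show ?case by simp
  next
    case (Suc m)
    have "coprime (\<Prod>j\<le>m. [:-zs j, 1:] ^ ns j) ([:-zs (Suc m), 1:] ^ ns (Suc m))"
    proof (rule prod_coprime_left)
      fix j assume "j \<in> {..m}"
      then have "zs j \<noteq> zs (Suc m)" using Suc.prems(2) by (auto dest: inj_onD)
      then show "coprime ([:-zs j, 1:] ^ ns j) ([:-zs (Suc m), 1:] ^ ns (Suc m))"
        using coprime_linear_polys by simp
    qed
    moreover have "inj_on zs {0..m}" using Suc.prems(2) by (rule inj_on_subset) auto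
    ultimately show ?case
      unfolding prod.atMost_Suc using Suc by (intro divides_mult) auto
  qed
qed

definition Qpoly :: "nat \<Rightarrow> (nat \<Rightarrow> nat) \<Rightarrow> (nat \<Rightarrow> complex) \<Rightarrow> complex poly" where
  "Qpoly m ns zs = (\<Prod>j\<le>m. [:-zs j, 1:] ^ ns j)"

lemma degree_Qpoly: "degree (Qpoly m ns zs) = (\<Sum>j\<le>m. ns j)"
  unfolding Qpoly_def by (subst degree_prod_eq_sum_degree) (auto simp: degree_power_eq)

lemma lead_coeff_Qpoly: "lead_coeff (Qpoly m ns zs) = 1"
  unfolding Qpoly_def by (simp add: lead_coeff_prod lead_coeff_power)

lemma coeff_0_Qpoly:
  assumes "zs 0 = 0" "ns 0 > 0"
  shows "coeff (Qpoly m ns zs) 0 = 0"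
  unfolding poly_0_coeff_0[symmetric] Qpoly_def poly_prod
  using assms by (intro prod_zero) (auto intro!: bexI[of _ 0])

lemma Zmat_carrier: "Zmat m ns zs \<in> carrier_mat (\<Sum>j\<le>m. ns j) (\<Sum>j\<le>m. ns j)"
  unfolding Zmat_def
  by (intro carrier_matI) (simp_all del: upt_Suc add: dim_diag_block_mat o_def Zblock_def
      sum_set_upt_conv_sum_list_nat[symmetric] atLeast0LessThan lessThan_Suc_atMost)

lemma evec_carrier: "evec m ns \<in> carrier_vec (\<Sum>j\<le>m. ns j)"
  by (simp add: evec_def)

lemma block_start_add_less_sum:
  "j \<le> m \<Longrightarrow> i < ns j \<Longrightarrow> block_start ns j + i < (\<Sum>j\<le>m. ns j)"
  using block_start_add_less[of j "Suc m" i ns] by (simp add: lessThan_Suc_atMost)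

lemma index_Zmat:
  assumes "j \<le> m" "i < ns j" "c < (\<Sum>j\<le>m. ns j)"
  shows "Zmat m ns zs $$ (block_start ns j + i, c) =
    (if c = block_start ns j + i then zs j
     else if c + 1 = block_start ns j + i \<and> 0 < i then 1 else 0)"
proof -
  let ?Bs = "map (\<lambda>j. Zblock (ns j) (zs j)) [0..<Suc m]"
  have nth: "?Bs ! j = Zblock (ns j) (zs j)"
    using assms(1) by (simp del: upt_Suc add: nth_map)
  have start: "block_start (\<lambda>k. dim_row (?Bs!k)) j = block_start ns j"
    using assms(1) by (intro sum.cong) (auto simp: Zblock_def simp del: upt_Suc)
  have "sum_list (map dim_col ?Bs) = dim_col (Zmat m ns zs)"
    unfolding Zmat_def dim_diag_block_mat ..
  then have "sum_list (map dim_col ?Bs) = (\<Sum>j\<le>m. ns j)"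
    using Zmat_carrier carrier_matD(2) by metis
  then have "diag_block_mat ?Bs $$ (block_start (\<lambda>k. dim_row (?Bs!k)) j + i, c) =
    (let s = block_start (\<lambda>k. dim_row (?Bs!k)) j in
     if s \<le> c \<and> c < s + dim_row (?Bs!j) then ?Bs!j $$ (i, c - s) else 0)"
    using assms by (intro index_diag_block_mat) (simp_all add: nth Zblock_def del: upt_Suc)
  then have "Zmat m ns zs $$ (block_start ns j + i, c) =
    (if block_start ns j \<le> c \<and> c < block_start ns j + ns j
     then Zblock (ns j) (zs j) $$ (i, c - block_start ns j) else 0)"
    unfolding Zmat_def start nth Let_def by (simp add: Zblock_def del: upt_Suc)
  then show ?thesis using assms by (auto simp: Zblock_def)
qed

lemma index_Zmat_mult_vec:
  assumes "j \<le> m" "i < ns j" and v: "v \<in> carrier_vec (\<Sum>j\<le>m. ns j)"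
  shows "(Zmat m ns zs *\<^sub>v v) $ (block_start ns j + i) =
     zs j * v $ (block_start ns j + i) + (if 0 < i then v $ (block_start ns j + i - 1) else 0)"
proof -
  let ?r = "block_start ns j + i"
  let ?D = "\<Sum>j\<le>m. ns j"
  have r: "?r < ?D" using assms(1,2) by (rule block_start_add_less_sum)
  have "(Zmat m ns zs *\<^sub>v v) $ ?r = (\<Sum>c\<in>{0..<?D}. Zmat m ns zs $$ (?r, c) * v $ c)"
    using r v Zmat_carrier[of m ns zs] by (simp add: scalar_prod_def)
  also have "\<dots> = (\<Sum>c\<in>{0..<?D}. (if c = ?r then zs j * v $ c else 0) +
       (if c = ?r - 1 then (if 0 < i then v $ c else 0) else 0))"
    using assms by (intro sum.cong) (auto simp: index_Zmat)
  also have "\<dots> = zs j * v $ ?r + (if 0 < i then v $ (?r - 1) else 0)"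
    using r by (auto simp: sum.distrib)
  finally show ?thesis .
qed

lemma index_evec:
  assumes "j \<le> m" "i < ns j"
  shows "evec m ns $ (block_start ns j + i) = (if i = 0 then 1 else 0)"
proof -
  have "block_start ns j + i \<noteq> block_start ns j'" if "0 < i" for j'
  proof (cases "j' \<le> j")
    case True
    then have "block_start ns j' \<le> block_start ns j" by (intro sum_mono2) auto
    then show ?thesis using that by linarith
  next
    case False
    then have "block_start ns (Suc j) \<le> block_start ns j'" by (intro sum_mono2) auto
    then show ?thesis using assms(2) by simp
  qed
  then show ?thesis
    using block_start_add_less_sum[of j m i ns] assms unfolding evec_def by auto
qed

lemma pow_mat_Suc_left: "A \<in> carrier_mat n n \<Longrightarrow> A ^\<^sub>m Suc k = A * A ^\<^sub>m k"
proof (induction k)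
  case 0 then show ?case by simp
next
  case (Suc k)
  have "A ^\<^sub>m Suc (Suc k) = (A * A ^\<^sub>m k) * A" using Suc by simp
  also have "\<dots> = A * (A ^\<^sub>m k * A)" using Suc.prems by (simp add: assoc_mult_mat[of _ n n _ n _ n])
  finally show ?case by simp
qed

lemma index_Zmat_pow_evec:
  assumes "j \<le> m" "i < ns j"
  shows "(Zmat m ns zs ^\<^sub>m k *\<^sub>v evec m ns) $ (block_start ns j + i) = coeff ([:zs j, 1:] ^ k) i"
  using assms(2)
proof (induction k arbitrary: i)
  case 0
  then show ?case
    using evec_carrier[of m ns] Zmat_carrier[of m ns zs] index_evec[of j m i ns] assms(1) 0 by simp
next
  case (Suc k)
  let ?D = "\<Sum>j\<le>m. ns j"
  let ?Z = "Zmat m ns zs"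
  have w: "?Z ^\<^sub>m k *\<^sub>v evec m ns \<in> carrier_vec ?D"
    using Zmat_carrier evec_carrier by (meson mult_mat_vec_carrier pow_carrier_mat)
  have "?Z ^\<^sub>m Suc k *\<^sub>v evec m ns = ?Z *\<^sub>v (?Z ^\<^sub>m k *\<^sub>v evec m ns)"
    using evec_carrier Zmat_carrier
    by (subst pow_mat_Suc_left[OF Zmat_carrier]) (simp add: assoc_mult_mat_vec[of _ ?D ?D _ ?D])
  also have "\<dots> $ (block_start ns j + i) = zs j * coeff ([:zs j, 1:] ^ k) i +
      (if 0 < i then coeff ([:zs j, 1:] ^ k) (i - 1) else 0)"
    using Suc.IH[of i] Suc.IH[of "i - 1"] Suc.prems assms
    by (subst index_Zmat_mult_vec[OF _ _ w]) (auto simp: add_diff_eq[symmetric])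
  also have "\<dots> = coeff ([:zs j, 1:] ^ Suc k) i"
    by (cases i) (auto simp: coeff_pCons)
  finally show ?case .
qed

lemma sum_coeff_index_Zmat_pow_evec:
  assumes "degree p < K" "j \<le> m" "i < ns j"
  shows "(\<Sum>k<K. coeff p k * (Zmat m ns zs ^\<^sub>m k *\<^sub>v evec m ns) $ (block_start ns j + i)) =
    coeff (pcompose p [:zs j, 1:]) i"
proof -
  have p: "(\<Sum>k<K. monom (coeff p k) k) = p"
    by (rule poly_eqI) (use assms(1) in \<open>auto simp: coeff_sum coeff_eq_0\<close>)
  have "pcompose p [:zs j, 1:] = (\<Sum>k<K. smult (coeff p k) ([:zs j, 1:] ^ k))"
    by (subst (1) p[symmetric])
      (simp add: pcompose_sum pcompose_smult monom_altdef pcompose_power_left pcompose_pCons)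
  then show ?thesis using assms(2,3) by (simp add: index_Zmat_pow_evec coeff_sum)
qed

lemma Qpoly_dvd_iff_Zmat_evec_eq_0:
  assumes "inj_on zs {0..m}" "degree p < K"
  shows "Qpoly m ns zs dvd p \<longleftrightarrow>
    (\<forall>r<(\<Sum>j\<le>m. ns j). (\<Sum>k<K. coeff p k * (Zmat m ns zs ^\<^sub>m k *\<^sub>v evec m ns) $ r) = 0)"
proof -
  let ?F = "\<lambda>r. \<Sum>k<K. coeff p k * (Zmat m ns zs ^\<^sub>m k *\<^sub>v evec m ns) $ r"
  have "(\<forall>r<(\<Sum>j\<le>m. ns j). ?F r = 0) \<longleftrightarrow> (\<forall>j\<le>m. \<forall>i<ns j. ?F (block_start ns j + i) = 0)"
    using ex_block_start_add[of _ ns "Suc m"] block_start_add_less_sum[of _ m _ ns]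
    by (fastforce simp: lessThan_Suc_atMost less_Suc_eq_le)
  also have "\<dots> \<longleftrightarrow> (\<forall>j\<le>m. \<forall>i<ns j. coeff (pcompose p [:zs j, 1:]) i = 0)"
    using assms(2) by (simp add: sum_coeff_index_Zmat_pow_evec)
  finally show ?thesis
    unfolding Qpoly_def prod_linear_powers_dvd_iff[OF assms(1)] linear_power_dvd_iff_taylor_coeffs
    by simp
qed

lemma index_Vmat:
  assumes "l > 0" "r < l * (\<Sum>j\<le>m. ns j)" "c < l * t"
  shows "Vmat l m ns zs t $$ (r, c) =
    (if r mod l = c mod l then (Zmat m ns zs ^\<^sub>m (c div l + 1) *\<^sub>v evec m ns) $ (r div l) else 0)"
proof -
  have "r div l < (\<Sum>j\<le>m. ns j)"
    using assms by (simp add: less_mult_imp_div_less mult.commute)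
  then show ?thesis
    using assms unfolding Vmat_def Let_def
    by (simp add: carrier_vecD[OF evec_carrier] kron_def mat_of_cols_index mult.commute)
qed

lemma index_Nmat:
  assumes "l > 0" "c < l * t" "a < l" "k < ts a"
  shows "Nmat l ts t $$ (c, block_start ts a + k) = (if c = k * l + a then 1 else 0)"
proof -
  have "block_start ts a + k < (\<Sum>i<l. ts i)" using assms(3,4) by (rule block_start_add_less)
  moreover have "c div l < ts (c mod l) \<and> block_start ts a + k = block_start ts (c mod l) + c div l
      \<longleftrightarrow> c = k * l + a"
    using block_start_add_inject[of ts a k "c mod l" "c div l"] assms(3,4)
    by (auto simp: mult.commute[of k l])
  ultimately show ?thesis
    using assms unfolding Nmat_def Nk_def by auto
qed

lemma index_Vmat_mult_Nmat:
  assumes "l > 0" "r < l * (\<Sum>j\<le>m. ns j)" "a < l" "k < ts a" "ts a \<le> t"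
  shows "(Vmat l m ns zs t * Nmat l ts t) $$ (r, block_start ts a + k) =
    (if r mod l = a then (Zmat m ns zs ^\<^sub>m (k + 1) *\<^sub>v evec m ns) $ (r div l) else 0)"
proof -
  let ?V = "Vmat l m ns zs t" and ?N = "Nmat l ts t" and ?c = "block_start ts a + k"
  have col: "k * l + a < l * t" using assms(3-5) by (intro mult_add_less_mult) simp_all
  have "?c < (\<Sum>i<l. ts i)" using assms(3,4) by (rule block_start_add_less)
  then have "(?V * ?N) $$ (r, ?c) = (\<Sum>c\<in>{0..<l * t}. ?V $$ (r, c) * ?N $$ (c, ?c))"
    using assms(2) by (simp add: Vmat_def Nmat_def Let_def carrier_vecD[OF evec_carrier]
        scalar_prod_def)
  also have "\<dots> = (\<Sum>c\<in>{0..<l * t}. if c = k * l + a then ?V $$ (r, c) else 0)"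
    using assms by (intro sum.cong) (auto simp: index_Nmat)
  also have "\<dots> = ?V $$ (r, k * l + a)" using col by simp
  finally show ?thesis using assms col by (simp add: index_Vmat)
qed

definition block_poly :: "complex vec \<Rightarrow> nat \<Rightarrow> nat \<Rightarrow> complex poly" where
  "block_poly v b K = (\<Sum>k<K. monom (v $ (b + k)) (Suc k))"

lemma coeff_block_poly:
  "coeff (block_poly v b K) i = (if 0 < i \<and> i \<le> K then v $ (b + i - 1) else 0)"
  by (cases i) (auto simp: block_poly_def coeff_sum coeff_monom)

lemma degree_block_poly: "degree (block_poly v b K) \<le> K"
  by (rule degree_le) (simp add: coeff_block_poly)

locale VN_setting =
  fixes l m n t :: nat and ns :: "nat \<Rightarrow> nat" and zs :: "nat \<Rightarrow> complex" and ts :: "nat \<Rightarrow> nat"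
  assumes l_pos: "l > 0"
    and ns_0_pos: "ns 0 > 0"
    and zs_0: "zs 0 = 0"
    and zs_inj: "inj_on zs {0..m}"
    and sum_ns: "(\<Sum>j\<le>m. ns j) = n + 1"
    and sum_ts: "(\<Sum>i<l. ts i) = l * n"
    and ts_le_t: "\<And>i. i < l \<Longrightarrow> ts i \<le> t"
begin

abbreviation W :: "nat \<Rightarrow> complex vec" where
  "W k \<equiv> Zmat m ns zs ^\<^sub>m k *\<^sub>v evec m ns"

abbreviation VN :: "complex mat" where
  "VN \<equiv> Vmat l m ns zs t * Nmat l ts t"

abbreviation L :: "complex mat" where
  "L \<equiv> mat (l * n) (l * n) (\<lambda>(i, j). VN $$ (i + l, j))"

abbreviation Q :: "complex poly" where
  "Q \<equiv> Qpoly m ns zs"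

lemma dim_VN: "dim_row VN = l * (n + 1)" "dim_col VN = l * n"
  by (simp_all add: Vmat_def Nmat_def Let_def carrier_vecD[OF evec_carrier] sum_ns sum_ts)

lemma index_VN:
  assumes "r < l * (n + 1)" "a < l" "k < ts a"
  shows "VN $$ (r, block_start ts a + k) = (if r mod l = a then W (k + 1) $ (r div l) else 0)"
  using index_Vmat_mult_Nmat[OF l_pos] assms ts_le_t sum_ns by (simp del: pow_mat.simps)

lemma index_W_Suc_0: "W (Suc k) $ 0 = 0"
  using index_Zmat_pow_evec[of 0 m 0 ns zs "Suc k"] ns_0_pos zs_0 by (simp add: coeff_0_power)

lemma VN_top_rows_zero:
  assumes "i < l" "j < l * n"
  shows "VN $$ (i, j) = 0"
proof -
  obtain a k where "a < l" "k < ts a" "j = block_start ts a + k"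
    using ex_block_start_add[of j ts l] assms(2) sum_ts by auto
  moreover have "i < l * (n + 1)" using assms(1) by simp
  ultimately show ?thesis
    using assms(1) index_W_Suc_0 by (simp add: index_VN del: pow_mat.simps)
qed

lemma index_L:
  assumes "i < l * n" "a < l" "k < ts a"
  shows "L $$ (i, block_start ts a + k) = (if i mod l = a then W (k + 1) $ (i div l + 1) else 0)"
proof -
  have "block_start ts a + k < l * n" using block_start_add_less[of a l k ts] assms sum_ts by simp
  moreover have "i + l < l * (n + 1)" using assms(1) by simp
  ultimately show ?thesis using assms l_pos by (simp add: index_VN del: pow_mat.simps)
qed

lemma index_L_mult_vec:
  assumes v: "v \<in> carrier_vec (l * n)" and "p < n" "a < l"
  shows "(L *\<^sub>v v) $ (p * l + a) =
    (\<Sum>k<Suc (ts a). coeff (block_poly v (block_start ts a) (ts a)) k * W k $ Suc p)"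
proof -
  let ?i = "p * l + a"
  have i: "?i < l * n" using assms(2,3) by (rule mult_add_less_mult)
  have blocks: "(\<Sum>c<l * n. g c) = (\<Sum>b<l. \<Sum>k<ts b. g (block_start ts b + k))"
    for g :: "nat \<Rightarrow> complex"
    using sum_lessThan_block_start[of g ts l] sum_ts by simp
  have "(L *\<^sub>v v) $ ?i = (\<Sum>c<l * n. L $$ (?i, c) * v $ c)"
    using i v by (simp add: scalar_prod_def atLeast0LessThan)
  also have "\<dots> = (\<Sum>b<l. if b = a
      then (\<Sum>k<ts a. v $ (block_start ts a + k) * W (Suc k) $ Suc p) else 0)"
    unfolding blocks using i assms(3) by (intro sum.cong refl) (auto simp: index_L mult.commute)
  also have "\<dots> = (\<Sum>k<ts a. v $ (block_start ts a + k) * W (Suc k) $ Suc p)"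
    using assms(3) by simp
  also have "\<dots> = (\<Sum>k<Suc (ts a). coeff (block_poly v (block_start ts a) (ts a)) k * W k $ Suc p)"
    unfolding sum.lessThan_Suc_shift by (simp add: coeff_block_poly)
  finally show ?thesis .
qed

lemma L_mult_vec_eq_0_iff:
  assumes v: "v \<in> carrier_vec (l * n)"
  shows "L *\<^sub>v v = 0\<^sub>v (l * n) \<longleftrightarrow> (\<forall>a<l. Q dvd block_poly v (block_start ts a) (ts a))"
proof -
  have block: "(\<forall>p<n. (L *\<^sub>v v) $ (p * l + a) = 0) \<longleftrightarrow> Q dvd block_poly v (block_start ts a) (ts a)"
    if a: "a < l" for a
  proof -
    let ?P = "block_poly v (block_start ts a) (ts a)"
    let ?F = "\<lambda>r. \<Sum>k<Suc (ts a). coeff ?P k * W k $ r"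
    have deg: "degree ?P < Suc (ts a)" using degree_block_poly le_imp_less_Suc by blast
    have "?F 0 = 0"
      using sum_coeff_index_Zmat_pow_evec[OF deg, of 0 m 0 ns zs] ns_0_pos zs_0
      by (simp add: coeff_block_poly)
    then have "(\<forall>p<n. ?F (Suc p) = 0) \<longleftrightarrow> (\<forall>r<Suc n. ?F r = 0)"
      by (simp add: All_less_Suc2)
    also have "\<dots> \<longleftrightarrow> Q dvd ?P"
      using Qpoly_dvd_iff_Zmat_evec_eq_0[OF zs_inj deg] sum_ns by simp
    finally show ?thesis using index_L_mult_vec[OF v _ a] by simp
  qed
  have Lv: "L *\<^sub>v v \<in> carrier_vec (l * n)" using v by (intro mult_mat_vec_carrier) simp_all
  show ?thesis unfolding vec_eq_0_iff_index_mult_add[OF Lv] by (simp add: block)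
qed

lemma L_mult_vec_eq_0_imp_eq_0:
  assumes "\<forall>a<l. ts a = n" "v \<in> carrier_vec (l * n)" "L *\<^sub>v v = 0\<^sub>v (l * n)"
  shows "v = 0\<^sub>v (l * n)"
proof -
  have block: "v $ (block_start ts a + k) = 0" if "a < l" "k < ts a" for a k
  proof -
    let ?P = "block_poly v (block_start ts a) (ts a)"
    have "Q dvd ?P" using L_mult_vec_eq_0_iff assms(2,3) that(1) by blast
    moreover have "degree ?P < degree Q"
      using degree_block_poly[of v "block_start ts a" "ts a"] assms(1) that(1)
      by (simp add: degree_Qpoly sum_ns)
    ultimately have "?P = 0" by (meson dvd_imp_degree_le leD)
    then show ?thesis using coeff_block_poly[of v "block_start ts a" "ts a" "Suc k"] that(2) by simp
  qed
  show ?thesis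
  proof (rule eq_vecI)
    fix c assume "c < dim_vec (0\<^sub>v (l * n) :: complex vec)"
    moreover obtain a k where "a < l" "k < ts a" "c = block_start ts a + k"
      using ex_block_start_add[of c ts l] calculation sum_ts by auto
    ultimately show "v $ c = 0\<^sub>v (l * n) $ c" using block by simp
  qed (use assms(2) in simp)
qed

lemma ex_nonzero_L_kernel_vector:
  assumes "a < l" "n < ts a"
  shows "\<exists>v\<in>carrier_vec (l * n). v \<noteq> 0\<^sub>v (l * n) \<and> L *\<^sub>v v = 0\<^sub>v (l * n)"
proof -
  define v where "v = vec (l * n) (\<lambda>c.
    if block_start ts a \<le> c \<and> c < block_start ts a + ts a then coeff Q (c - block_start ts a + 1) else 0)"
  have v_block: "v $ (block_start ts b + k) = (if b = a then coeff Q (k + 1) else 0)"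
    if "b < l" "k < ts b" for b k
  proof -
    have "block_start ts b + k < l * n" using block_start_add_less[of b l k ts] that sum_ts by simp
    moreover have "block_start ts a \<le> block_start ts b + k \<and> block_start ts b + k < block_start ts a + ts a
        \<longleftrightarrow> b = a"
      using block_start_add_inject[of ts b k a "block_start ts b + k - block_start ts a"] that by auto
    ultimately show ?thesis unfolding v_def by auto
  qed
  have "block_poly v (block_start ts b) (ts b) = (if b = a then Q else 0)" if b: "b < l" for b
  proof (rule poly_eqI)
    fix i
    have "coeff Q i = 0" if "i = 0 \<or> ts a < i"
      using that assms(2) coeff_0_Qpoly[of zs ns m] zs_0 ns_0_pos coeff_eq_0[of Q i]
      by (auto simp: degree_Qpoly sum_ns)
    then show "coeff (block_poly v (block_start ts b) (ts b)) i = coeff (if b = a then Q else 0) i"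
      using v_block[OF b, of "i - 1"] by (auto simp: coeff_block_poly)
  qed
  then have "L *\<^sub>v v = 0\<^sub>v (l * n)"
    by (subst L_mult_vec_eq_0_iff) (auto simp: v_def)
  moreover have "v $ (block_start ts a + n) = 1"
    using v_block[OF assms(1,2)] lead_coeff_Qpoly[of m ns zs] by (simp add: degree_Qpoly sum_ns)
  then have "v \<noteq> 0\<^sub>v (l * n)"
    using block_start_add_less[of a l n ts] assms sum_ts by auto
  ultimately show ?thesis by (auto simp: v_def)
qed

lemma invertible_L_iff: "invertible_mat L \<longleftrightarrow> (\<forall>a<l. ts a = n)"
proof -
  have L: "L \<in> carrier_mat (l * n) (l * n)" by simp
  show ?thesis
  proof
    assume inv: "invertible_mat L"
    show "\<forall>a<l. ts a = n"
    proof (rule ccontr)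
      assume "\<not> (\<forall>a<l. ts a = n)"
      then obtain a where "a < l" "n < ts a" using sum_eq_mult_imp_ex_greater[OF sum_ts] by blast
      then show False
        using ex_nonzero_L_kernel_vector inv invertible_mat_iff_trivial_kernel[OF L] by blast
    qed
  next
    assume "\<forall>a<l. ts a = n"
    then show "invertible_mat L"
      using L_mult_vec_eq_0_imp_eq_0 invertible_mat_iff_trivial_kernel[OF L] by blast
  qed
qed

end

theorem lemma3:
  fixes l m n t :: nat and ns :: "nat \<Rightarrow> nat" and zs :: "nat \<Rightarrow> complex" and ts :: "nat \<Rightarrow> nat"
  assumes "l \<ge> 1"
    and "\<forall>j\<le>m. ns j > 0"
    and "n = (\<Sum>j\<le>m. ns j) - 1" and "n \<ge> 1"
    and "zs 0 = 0" and "inj_on zs {0..m}" and "\<forall>j\<le>m. norm (zs j) < 1"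
    and "\<forall>i<l. ts i > 0" and "(\<Sum>i<l. ts i) = n * l"
    and "t = Max (ts ` {..<l})"
  shows "let VN = Vmat l m ns zs t * Nmat l ts t;
             L = mat (l * n) (l * n) (\<lambda>(i,j). VN $$ (i + l, j))
         in dim_row VN = l * (n + 1) \<and> dim_col VN = l * n
            \<and> (\<forall>i<l. \<forall>j<l * n. VN $$ (i, j) = 0)
            \<and> (invertible_mat L \<longleftrightarrow> (\<forall>i<l. ts i = n))"
proof -
  have "ns 0 \<le> (\<Sum>j\<le>m. ns j)" by (rule member_le_sum) auto
  then have "(\<Sum>j\<le>m. ns j) = n + 1" using assms(2,3) by auto
  moreover have "ts i \<le> t" if "i < l" for i
    unfolding assms(10) using that by (intro Max_ge) auto
  ultimately interpret VN_setting l m n t ns zs ts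
    using assms by unfold_locales (auto simp: mult.commute)
  show ?thesis unfolding Let_def using dim_VN VN_top_rows_zero invertible_L_iff by simp
qed

end
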